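(* Consider any fair, well-formed execution of COP as described in the context, with history $\sigma$ (and $S$ correct or Byzantine). If some client $C_k$ confirms an operation $o_1$ before an operation $o_2$, then $o_2$ does not precede $o_1$ in $\sigma$ (i.e., it is not the case that $o_2$ completes before $o_1$ is invoked).
   Context: System model. Clients $C_1,\dots,C_n$ and server $S$ in an asynchronous system, each client connected to $S$ by a reliable FIFO channel; clients are correct; $S$ is correct or Byzantine (may send arbitrary messages). Executions are fair and well-formed. Functionality. $F$ is deterministic over states $\mathcal{S}$, operations $\mathcal{O}$, responses $\mathcal{R}$: $F(s,o)=(s',r)$, extended to sequences by applying operations in order. $\mathrm{commute}_F(s,\rho_1,\rho_2)$ is true iff every interleaving of sequences $\rho_1,\rho_2$ (preserving each one's internal order) executed from $s$ yields the same final state and the same respective responses. Cryptography (ideal). $\mathrm{hash}$ is ideal collision-free; $\mathrm{sign}_i$ is invocable only by $C_i$ and $\mathrm{verify}_i(\phi,m)$ is true iff $C_i$ previously executed $\mathrm{sign}_i(m)$ obtaining $\phi$. $\|$ is concatenation. COP client $C_i$. State: $u$ (initially $\bot$); $c$ (initially $0$); map $H$ with $H[0]=\mathrm{null}$; map $Z$ to $\{\mathrm{success},\mathrm{abort}\}$; state $s$ (initially $s_0$). (1) On invocation of $o$: $u\leftarrow o$, send $\langle\mathrm{invoke},o,c,\mathrm{sign}_i(\mathrm{invoke}\|o\|i)\rangle$ to $S$. (2) On $\langle\mathrm{reply},\omega\rangle$: $\gamma,\mu\leftarrow\langle\rangle$. For $k=1,\dots,\mathrm{length}(\omega)$: $(o,j,\tau)=\omega[k]$,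 $l=c+k$; halt if $\mathrm{verify}_j(\tau,\mathrm{invoke}\|o\|j)$ fails; if $H[l]$ undefined set $H[l]\leftarrow\mathrm{hash}(H[l-1]\|o\|l\|j)$, else halt if $H[l]\neq\mathrm{hash}(H[l-1]\|o\|l\|j)$; if $j=i$ and $Z[l]=\mathrm{success}$ append $o$ to $\mu$, else if $j\neq i$ append $o$ to $\gamma$. Halt if $\omega$ is empty or its last entry has operation $\neq u$ or index $\neq i$. $(a,r)\leftarrow F(s,\mu)$. If $\mathrm{commute}_F(a,\langle u\rangle,\gamma)$: $(a,r)\leftarrow F(a,u)$, $Z[l]\leftarrow\mathrm{success}$; else $r\leftarrow\bot$, $Z[l]\leftarrow\mathrm{abort}$. Send $\langle\mathrm{commit},u,l,H[l],Z[l],\mathrm{sign}_i(\mathrm{commit}\|u\|l\|H[l]\|Z[l])\rangle$ to $S$, set $u\leftarrow\bot$, output $r$. (3) On $\langle\mathrm{broadcast},o,q,h,z,\phi,j\rangle$: halt unless $q=c+1$ and $\mathrm{verify}_j(\phi,\mathrm{commit}\|o\|q\|h\|z)$; if $H[q]$ undefined set $H[q]\leftarrow\mathrm{hash}(H[q-1]\|o\|q\|j)$; halt if $h\neq H[q]$; if $z=\mathrm{success}$, $(s,\cdot)\leftarrow F(s,o)$; $c\leftarrow c+1$. COP server $S$ (when correct). State $t=0$, $b=0$, maps $I,O$ empty. On $\langle\mathrm{invoke},o,c,\tau\rangle$ from $C_i$: $t\leftarrow t+1$, $I[t]\leftarrow(o,i,\tau)$, send $\langle\mathrm{reply},\langle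 I[c+1],\dots,I[t]\rangle\rangle$ to $C_i$. On $\langle\mathrm{commit},o,q,h,z,\phi\rangle$ from $C_i$: $O[q]\leftarrow(o,h,z,\phi,i)$; while $O[b+1]$ defined: $b\leftarrow b+1$, send $\langle\mathrm{broadcast},o',b,h',z',\phi',j\rangle$ to all clients where $(o',h',z',\phi',j)=O[b]$. Terminology. The history $\sigma$ is the sequence of invocation and response events at the clients; $o$ precedes $o'$ in $\sigma$ if $o$ completes before $o'$ is invoked. A client commits an operation when it issues the commit signature in step (2). A client confirms an operation $o$ when it processes a broadcast message for $o$ in step (3) passing all checks. *)

theory Defs
  imports Main
begin

section \<open>Model of the COP protocol with ideal cryptography\<close>

text \<open>Ideal collision-free hash: hash values are free terms, so
  hash(H[l-1] || op || l || j) is represented by the constructor HHash.\<close>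
datatype 'o hv = HNull | HHash "'o hv" 'o nat nat

datatype zv = Success | Abort

text \<open>Signed payloads: invoke||op||i and commit||op||l||h||z.\<close>
datatype 'o payload = PInv 'o nat | PCom 'o nat "'o hv" zv

datatype 'o sigv = Sig nat "'o payload"

text \<open>verify_j(phi, m) holds iff C_j previously executed sign_j(m) obtaining phi;
  sg is the set of (signer, payload) pairs signed so far.\<close>
definition verify :: "(nat \<times> 'o payload) set \<Rightarrow> nat \<Rightarrow> 'o sigv \<Rightarrow> 'o payload \<Rightarrow> bool" where
  "verify sg j phi m \<longleftrightarrow> phi = Sig j m \<and> (j, m) \<in> sg"

definition Fstate :: "('s \<Rightarrow> 'o \<Rightarrow> 's \<times> 'r) \<Rightarrow> 's \<Rightarrow> 'o list \<Rightarrow> 's" where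
  "Fstate F s ops = fold (\<lambda>op s. fst (F s op)) ops s"

fun runT :: "('s \<Rightarrow> 'o \<Rightarrow> 's \<times> 'r) \<Rightarrow> 's \<Rightarrow> ('o + 'o) list \<Rightarrow> 's \<times> ('r + 'r) list" where
  "runT F s [] = (s, [])"
| "runT F s (x # xs) =
     (let (s', r) = F s (case x of Inl op \<Rightarrow> op | Inr op \<Rightarrow> op);
          (s'', rs) = runT F s' xs
      in (s'', (case x of Inl _ \<Rightarrow> Inl r | Inr _ \<Rightarrow> Inr r) # rs))"

definition outc :: "'s \<times> ('r + 'r) list \<Rightarrow> 's \<times> 'r list \<times> 'r list" where
  "outc p = (fst p, map projl (filter isl (snd p)), map projr (filter (Not \<circ> isl) (snd p)))"

definition commute :: "('s \<Rightarrow> 'o \<Rightarrow> 's \<times> 'r) \<Rightarrow> 's \<Rightarrow> 'o list \<Rightarrow> 'o list \<Rightarrow> bool" where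
  "commute F s rho1 rho2 \<longleftrightarrow>
     (\<forall>w \<in> shuffles (map Inl rho1) (map Inr rho2).
      \<forall>w' \<in> shuffles (map Inl rho1) (map Inr rho2).
        outc (runT F s w) = outc (runT F s w'))"

record ('o, 's) cstate =
  cu :: "'o option"
  cc :: nat
  cH :: "nat \<Rightarrow> 'o hv option"
  cZ :: "nat \<Rightarrow> zv option"
  cs :: 's
  chalt :: bool

type_synonym ('o, 's) gstate = "(nat \<Rightarrow> ('o, 's) cstate) \<times> (nat \<times> 'o payload) set"

text \<open>Events: an invocation at a client, or the delivery at client i of a message
  from the (possibly Byzantine) server, whose content is arbitrary.\<close>
datatype 'o event =
    EInv nat 'o
  | EReply nat "('o \<times> nat \<times> 'o sigv) list"
  | EBcast nat 'o nat "'o hv" zv "'o sigv" nat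

datatype ('o, 'r) obs =
    OInvoke nat 'o
  | OResp nat 'o "'r option"
  | OConfirm nat 'o
  | OHalt nat

text \<open>The loop of step (2); None means the client halts.\<close>
fun scan :: "(nat \<times> 'o payload) set \<Rightarrow> nat \<Rightarrow> nat \<Rightarrow> (nat \<Rightarrow> zv option) \<Rightarrow> nat
   \<Rightarrow> ('o \<times> nat \<times> 'o sigv) list \<Rightarrow> (nat \<Rightarrow> 'o hv option) \<Rightarrow> 'o list \<Rightarrow> 'o list
   \<Rightarrow> ((nat \<Rightarrow> 'o hv option) \<times> 'o list \<times> 'o list) option" where
  "scan sg i c Z k [] H \<gamma> \<mu> = Some (H, \<gamma>, \<mu>)"
| "scan sg i c Z k ((op, j, \<tau>) # rest) H \<gamma> \<mu> =
    (let l = c + k; hv = HHash (the (H (l - 1))) op l j in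
     if \<not> verify sg j \<tau> (PInv op j) then None
     else if H l \<noteq> None \<and> H l \<noteq> Some hv then None
     else scan sg i c Z (Suc k) rest (if H l = None then H(l \<mapsto> hv) else H)
            (if j \<noteq> i then \<gamma> @ [op] else \<gamma>)
            (if j = i \<and> Z l = Some Success then \<mu> @ [op] else \<mu>))"

definition halt_at :: "('o, 's) gstate \<Rightarrow> nat \<Rightarrow> (('o, 's) gstate \<times> ('o, 'r) obs) option" where
  "halt_at g i = Some (((fst g)(i := (fst g i)\<lparr>chalt := True\<rparr>), snd g), OHalt i)"

definition step :: "('s \<Rightarrow> 'o \<Rightarrow> 's \<times> 'r) \<Rightarrow> nat \<Rightarrow> ('o, 's) gstate \<Rightarrow> 'o event
                    \<Rightarrow> (('o, 's) gstate \<times> ('o, 'r) obs) option" where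
  "step F n g e = (let C = fst g; sg = snd g in
    case e of
      EInv i op \<Rightarrow>
        (if i < n \<and> \<not> chalt (C i) \<and> cu (C i) = None
         then Some ((C(i := (C i)\<lparr>cu := Some op\<rparr>), insert (i, PInv op i) sg), OInvoke i op)
         else None)
    | EReply i \<omega> \<Rightarrow>
        (if i < n \<and> \<not> chalt (C i) then
          (let st = C i in
           case scan sg i (cc st) (cZ st) 1 \<omega> (cH st) [] [] of
             None \<Rightarrow> halt_at g i
           | Some (H, \<gamma>, \<mu>) \<Rightarrow>
               (if \<omega> = [] \<or> Some (fst (last \<omega>)) \<noteq> cu st \<or> fst (snd (last \<omega>)) \<noteq> i
                then halt_at g i
                else
                  (let l = cc st + length \<omega>;
                       u = the (cu st);
                       a = Fstate F (cs st) \<mu>;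
                       ok = commute F a [u] \<gamma>;
                       z = (if ok then Success else Abort);
                       r = (if ok then Some (snd (F a u)) else None);
                       st' = st\<lparr>cH := H, cZ := (cZ st)(l \<mapsto> z), cu := None\<rparr>
                   in Some ((C(i := st'), insert (i, PCom u l (the (H l)) z) sg), OResp i u r))))
         else None)
    | EBcast i op q h z \<phi> j \<Rightarrow>
        (if i < n \<and> \<not> chalt (C i) then
          (let st = C i in
           if q = cc st + 1 \<and> verify sg j \<phi> (PCom op q h z) then
             (let H' = (if cH st q = None
                        then (cH st)(q \<mapsto> HHash (the (cH st (q - 1))) op q j) else cH st)
              in if H' q \<noteq> Some h then halt_at g i
                 else Some ((C(i := st\<lparr>cH := H',
                                      cs := (if z = Success then fst (F (cs st) op) else cs st),
                                      cc := Suc (cc st)\<rparr>), sg), OConfirm i op))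
           else halt_at g i)
         else None))"

definition init :: "'s \<Rightarrow> ('o, 's) gstate" where
  "init s0 = ((\<lambda>i. \<lparr>cu = None, cc = 0, cH = [0 \<mapsto> HNull], cZ = Map.empty, cs = s0, chalt = False\<rparr>), {})"

fun run :: "('s \<Rightarrow> 'o \<Rightarrow> 's \<times> 'r) \<Rightarrow> nat \<Rightarrow> ('o, 's) gstate \<Rightarrow> 'o event list
            \<Rightarrow> ('o, 'r) obs list option" where
  "run F n g [] = Some []"
| "run F n g (e # es) =
     (case step F n g e of
        None \<Rightarrow> None
      | Some (g', ob) \<Rightarrow> map_option (Cons ob) (run F n g' es))"

definition invoked :: "('o, 'r) obs list \<Rightarrow> 'o list" where
  "invoked obs = concat (map (\<lambda>x. case x of OInvoke i op \<Rightarrow> [op] | _ \<Rightarrow> []) obs)"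

definition precedes :: "('o, 'r) obs list \<Rightarrow> 'o \<Rightarrow> 'o \<Rightarrow> bool" where
  "precedes obs op op' \<longleftrightarrow>
     (\<exists>a b i i' r. a < b \<and> b < length obs \<and> obs ! a = OResp i op r \<and> obs ! b = OInvoke i' op')"

end

theory Submission
  imports Defs
begin

text \<open>Every hash a client stores is a chain linking index l to index l - 1, and a client's chain
  only grows. Hence the chain held by C_k after confirming o2 extends the one it held after
  confirming o1 and so mentions o1. The broadcast for o2 carries exactly this hash, signed in the
  commit of o2, and a client signs a commit only when it responds, with a hash built from
  operations already invoked (each chain entry carries an invocation signature). So o1 is invoked
  before o2 responds, and since every operation is invoked and answered at most once, o2 cannot
  complete before o1 is invoked.\<close>

fun hash_ops :: "'o hv \<Rightarrow> 'o set" where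
  "hash_ops HNull = {}"
| "hash_ops (HHash x op l j) = insert op (hash_ops x)"

definition hash_chain :: "(nat \<Rightarrow> 'o hv option) \<Rightarrow> bool" where
  "hash_chain H \<longleftrightarrow>
     (\<forall>l h. H l = Some h \<longrightarrow> 0 < l \<longrightarrow> (\<exists>x op j. h = HHash x op l j \<and> H (l - 1) = Some x))"

definition hash_ops_within :: "(nat \<Rightarrow> 'o hv option) \<Rightarrow> 'o set \<Rightarrow> bool" where
  "hash_ops_within H S \<longleftrightarrow> (\<forall>l h. H l = Some h \<longrightarrow> hash_ops h \<subseteq> S)"

lemma hash_chain_extend:
  assumes "hash_chain H" "H (l - 1) = Some x" "0 < l"
  shows "hash_chain (if H l = None then H(l \<mapsto> HHash x op l j) else H)"
proof (cases "H l = None")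
  case True
  have "(H(l \<mapsto> HHash x op l j)) (l' - 1) = Some x'" if "H (l' - 1) = Some x'" for l' x'
    using that True by (cases "l' - 1 = l") auto
  then show ?thesis
    using assms True unfolding hash_chain_def by (fastforce split: if_splits)
next
  case False
  with assms(1) show ?thesis by (simp only: if_False)
qed

lemma hash_ops_within_extend:
  assumes "hash_ops_within H S" "H (l - 1) = Some x" "op \<in> S"
  shows "hash_ops_within (if H l = None then H(l \<mapsto> HHash x op l j) else H) S"
  using assms unfolding hash_ops_within_def by auto

lemma hash_ops_within_mono:
  "hash_ops_within H S \<Longrightarrow> S \<subseteq> S' \<Longrightarrow> hash_ops_within H S'"
  unfolding hash_ops_within_def by blast

lemma hash_chain_ops_mono:
  assumes "hash_chain H" "H l' = Some h'" "l' \<le> l" "H l = Some h"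
  shows "hash_ops h' \<subseteq> hash_ops h"
  using assms(3,4)
proof (induction l arbitrary: h)
  case 0
  then show ?case using assms(2) by simp
next
  case (Suc m)
  show ?case
  proof (cases "l' = Suc m")
    case True
    then show ?thesis using Suc.prems assms(2) by simp
  next
    case False
    obtain x op j where "h = HHash x op (Suc m) j" "H m = Some x"
      using assms(1) Suc.prems(2) unfolding hash_chain_def by fastforce
    then show ?thesis using Suc.IH[of x] False Suc.prems(1) by auto
  qed
qed

lemma scan_map_le:
  "scan sg i c Z k \<omega> H \<gamma> \<mu> = Some (H', \<gamma>', \<mu>') \<Longrightarrow> H \<subseteq>\<^sub>m H'"
proof (induction \<omega> arbitrary: k H \<gamma> \<mu>)
  case (Cons a \<omega>)
  obtain op j \<tau> where a: "a = (op, j, \<tau>)" by (cases a)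
  let ?l = "c + k"
  let ?H1 = "if H ?l = None then H(?l \<mapsto> HHash (the (H (?l - 1))) op ?l j) else H"
  have "scan sg i c Z (Suc k) \<omega> ?H1 (if j \<noteq> i then \<gamma> @ [op] else \<gamma>)
          (if j = i \<and> Z ?l = Some Success then \<mu> @ [op] else \<mu>) = Some (H', \<gamma>', \<mu>')"
    using Cons.prems a by (auto simp: Let_def split: if_splits)
  moreover have "H \<subseteq>\<^sub>m ?H1" by (auto simp: map_le_def)
  ultimately show ?case using Cons.IH map_le_trans by blast
qed simp

lemma scan_records_last:
  assumes "scan sg i c Z k \<omega> H \<gamma> \<mu> = Some (H', \<gamma>', \<mu>')" "\<omega> \<noteq> []"
  shows "\<exists>x. H' (c + k + length \<omega> - 1) =
           Some (HHash x (fst (last \<omega>)) (c + k + length \<omega> - 1) (fst (snd (last \<omega>))))"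
  using assms
proof (induction \<omega> arbitrary: k H \<gamma> \<mu>)
  case (Cons a \<omega>)
  obtain op j \<tau> where a: "a = (op, j, \<tau>)" by (cases a)
  let ?l = "c + k"
  let ?hv = "HHash (the (H (?l - 1))) op ?l j"
  let ?H1 = "if H ?l = None then H(?l \<mapsto> ?hv) else H"
  have H1: "?H1 ?l = Some ?hv"
    and rest: "scan sg i c Z (Suc k) \<omega> ?H1 (if j \<noteq> i then \<gamma> @ [op] else \<gamma>)
                 (if j = i \<and> Z ?l = Some Success then \<mu> @ [op] else \<mu>) = Some (H', \<gamma>', \<mu>')"
    using Cons.prems(1) a by (auto simp: Let_def split: if_splits)
  show ?case
  proof (cases "\<omega> = []")
    case True
    then show ?thesis using rest H1 a by simp
  next
    case False
    then show ?thesis using Cons.IH[OF rest] by simp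
  qed
qed simp

lemma scan_hash_chain:
  assumes "scan sg i c Z k \<omega> H \<gamma> \<mu> = Some (H', \<gamma>', \<mu>')" "0 < k" "H (c + k - 1) \<noteq> None"
    and "hash_chain H" "hash_ops_within H S" "\<forall>j op. (j, PInv op j) \<in> sg \<longrightarrow> op \<in> S"
  shows "hash_chain H' \<and> hash_ops_within H' S"
  using assms
proof (induction \<omega> arbitrary: k H \<gamma> \<mu>)
  case (Cons a \<omega>)
  obtain op j \<tau> where a: "a = (op, j, \<tau>)" by (cases a)
  let ?l = "c + k"
  obtain x where x: "H (?l - 1) = Some x" using Cons.prems(3) by auto
  let ?H1 = "if H ?l = None then H(?l \<mapsto> HHash x op ?l j) else H"
  have "verify sg j \<tau> (PInv op j)"
    and rest: "scan sg i c Z (Suc k) \<omega> ?H1 (if j \<noteq> i then \<gamma> @ [op] else \<gamma>)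
                 (if j = i \<and> Z ?l = Some Success then \<mu> @ [op] else \<mu>) = Some (H', \<gamma>', \<mu>')"
    using Cons.prems(1) a x by (auto simp: Let_def split: if_splits)
  then have "op \<in> S" using Cons.prems(6) by (auto simp: verify_def)
  moreover have "?H1 (c + Suc k - 1) \<noteq> None" by simp
  ultimately show ?case
    using Cons.IH[OF rest] Cons.prems(2,4,5,6) x
      hash_chain_extend[of H ?l x op j] hash_ops_within_extend[of H S ?l x op j]
    by simp
qed simp

definition resps :: "('o, 'r) obs list \<Rightarrow> 'o list" where
  "resps obs = concat (map (\<lambda>x. case x of OResp i op r \<Rightarrow> [op] | _ \<Rightarrow> []) obs)"

lemma invoked_append [simp]:
  "invoked (xs @ ys) = invoked xs @ invoked ys"
  by (simp add: invoked_def)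

lemma resps_append [simp]:
  "resps (xs @ ys) = resps xs @ resps ys"
  by (simp add: resps_def)

lemma invoked_resps_single [simp]:
  "invoked [OInvoke i op] = [op]" "resps [OInvoke i op] = []"
  "invoked [OResp i op r] = []" "resps [OResp i op r] = [op]"
  "invoked [OConfirm i op] = []" "resps [OConfirm i op] = []"
  "invoked [OHalt i] = []" "resps [OHalt i] = []"
  by (simp_all add: invoked_def resps_def)

lemma set_invoked_take_subset: "set (invoked (take p xs)) \<subseteq> set (invoked xs)"
  by (metis append_take_drop_id invoked_append set_append Un_upper1)

lemma distinct_invoked_take: "distinct (invoked xs) \<Longrightarrow> distinct (invoked (take p xs))"
  by (metis append_take_drop_id invoked_append distinct_append)

lemma invoked_take_nth:
  assumes "op \<in> set (invoked (take p obs))"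
  shows "\<exists>b<p. b < length obs \<and> (\<exists>i. obs ! b = OInvoke i op)"
proof -
  obtain x where x: "x \<in> set (take p obs)" "op \<in> set (case x of OInvoke i op \<Rightarrow> [op] | _ \<Rightarrow> [])"
    using assms unfolding invoked_def by auto
  then obtain b where "b < p" "b < length obs" "obs ! b = x"
    by (auto simp: in_set_conv_nth)
  with x(2) show ?thesis by (cases x) auto
qed

lemma nth_eq_if_distinct_concat_map:
  assumes "distinct (concat (map f xs))" "p < length xs" "p' < length xs"
    and "f (xs ! p) = [a]" "f (xs ! p') = [a]"
  shows "p = p'"
  using assms
proof (induction xs arbitrary: p p')
  case (Cons x xs)
  have head: "a \<notin> set (concat (map f xs))" if "f x = [a]" using Cons.prems(1) that by simp
  have tail: "a \<in> set (concat (map f xs))" if "m < length xs" "f (xs ! m) = [a]" for m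
  proof -
    have "a \<in> set (f (xs ! m))" using that(2) by simp
    with nth_mem[OF that(1)] show ?thesis by auto
  qed
  show ?case
  proof (cases p; cases p')
    fix m m' assume "p = Suc m" "p' = Suc m'"
    then show ?thesis using Cons.IH[of m m'] Cons.prems by simp
  qed (use Cons.prems head tail in auto)
qed simp

definition commits_justified :: "(nat \<times> 'o payload) set \<Rightarrow> ('o, 'r) obs list \<Rightarrow> bool" where
  "commits_justified sg pre \<longleftrightarrow>
     (\<forall>j op q h z. (j, PCom op q h z) \<in> sg \<longrightarrow> (\<exists>x j'. h = HHash x op q j') \<and>
        (\<exists>p<length pre. \<exists>r. pre ! p = OResp j op r \<and> hash_ops h \<subseteq> set (invoked (take p pre))))"

lemma commits_justified_append:
  assumes "commits_justified sg pre"
  shows "commits_justified sg (pre @ xs)"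
  unfolding commits_justified_def
proof (intro allI impI)
  fix j op q h z
  assume "(j, PCom op q h z) \<in> sg"
  then obtain p r where "\<exists>x j'. h = HHash x op q j'" "p < length pre" "pre ! p = OResp j op r"
    "hash_ops h \<subseteq> set (invoked (take p pre))"
    using assms unfolding commits_justified_def by blast
  then show "(\<exists>x j'. h = HHash x op q j') \<and> (\<exists>p<length (pre @ xs). \<exists>r. (pre @ xs) ! p = OResp j op r
      \<and> hash_ops h \<subseteq> set (invoked (take p (pre @ xs))))"
    by (intro conjI exI[of _ p]) (auto simp: nth_append)
qed

lemma commits_justified_insert_PInv:
  "commits_justified sg pre \<Longrightarrow> commits_justified (insert (i, PInv op i) sg) pre"
  unfolding commits_justified_def by blast

lemma commits_justified_insert_PCom:
  assumes "commits_justified sg pre" "hash_ops (HHash x op q i) \<subseteq> set (invoked pre)"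
  shows "commits_justified (insert (i, PCom op q (HHash x op q i) z) sg) (pre @ [OResp i op r])"
  unfolding commits_justified_def
proof (intro allI impI)
  fix j op' q' h z'
  assume "(j, PCom op' q' h z') \<in> insert (i, PCom op q (HHash x op q i) z) sg"
  then consider "(j, PCom op' q' h z') \<in> sg" | "j = i" "op' = op" "q' = q" "h = HHash x op q i"
    by auto
  then show "(\<exists>x j'. h = HHash x op' q' j') \<and> (\<exists>p<length (pre @ [OResp i op r]).
      \<exists>r'. (pre @ [OResp i op r]) ! p = OResp j op' r'
        \<and> hash_ops h \<subseteq> set (invoked (take p (pre @ [OResp i op r]))))"
  proof cases
    case 1
    then show ?thesis
      using commits_justified_append[OF assms(1)] unfolding commits_justified_def by blast
  next
    case 2
    then show ?thesis using assms(2) by (intro conjI exI[of _ "length pre"]) auto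
  qed
qed

lemma commits_justified_op_in_hash:
  assumes "commits_justified sg pre" "(j, PCom op q h z) \<in> sg"
  shows "op \<in> hash_ops h"
  using assms unfolding commits_justified_def by fastforce

lemma commits_justified_op_invoked:
  assumes "commits_justified sg pre" "(j, PCom op q h z) \<in> sg"
  shows "op \<in> set (invoked pre)"
proof -
  obtain x j' p where "h = HHash x op q j'" "hash_ops h \<subseteq> set (invoked (take p pre))"
    using assms unfolding commits_justified_def by blast
  then show ?thesis using set_invoked_take_subset by fastforce
qed

definition cop_inv :: "(nat \<Rightarrow> ('o, 's) cstate) \<Rightarrow> (nat \<times> 'o payload) set \<Rightarrow> ('o, 'r) obs list \<Rightarrow> bool" where
  "cop_inv C sg pre \<longleftrightarrow>
     (\<forall>i. cH (C i) (cc (C i)) \<noteq> None \<and> hash_chain (cH (C i))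
          \<and> hash_ops_within (cH (C i)) (set (invoked pre))) \<and>
     (\<forall>j op. (j, PInv op j) \<in> sg \<longrightarrow> op \<in> set (invoked pre)) \<and>
     commits_justified sg pre \<and>
     (\<forall>i op. cu (C i) = Some op \<longrightarrow> op \<in> set (invoked pre) \<and> op \<notin> set (resps pre)) \<and>
     (\<forall>i i'. i \<noteq> i' \<longrightarrow> cu (C i) = None \<or> cu (C i) \<noteq> cu (C i')) \<and>  \<comment> \<open>keeps responses distinct\<close>
     set (resps pre) \<subseteq> set (invoked pre) \<and> distinct (resps pre)"

lemma cop_inv_init: "cop_inv (fst (init s0)) (snd (init s0)) []"
  by (simp add: cop_inv_def init_def hash_chain_def hash_ops_within_def commits_justified_def
      invoked_def resps_def)

lemma cop_inv_halt:
  assumes "cop_inv C sg pre"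
  shows "cop_inv (C(i := (C i)\<lparr>chalt := True\<rparr>)) sg (pre @ [OHalt i])"
  using assms commits_justified_append unfolding cop_inv_def by auto

lemma cop_inv_invoke:
  assumes inv: "cop_inv C sg pre" and idle: "cu (C i) = None"
    and fresh: "op \<notin> set (invoked pre)"
  shows "cop_inv (C(i := (C i)\<lparr>cu := Some op\<rparr>)) (insert (i, PInv op i) sg) (pre @ [OInvoke i op])"
proof -
  note I = inv[unfolded cop_inv_def]
  have "op \<notin> set (resps pre)" using I fresh by blast
  have "\<forall>i'. cu (C i') \<noteq> Some op" using I fresh by blast
  have "commits_justified sg pre" using I by blast
  note cj = commits_justified_append[OF commits_justified_insert_PInv[OF this]]
  have "hash_ops_within (cH (C i')) (insert op (set (invoked pre)))" for i'
    using I hash_ops_within_mono by blast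
  show ?thesis
    using I idle cj \<open>op \<notin> set (resps pre)\<close> \<open>\<forall>i'. cu (C i') \<noteq> Some op\<close>
      \<open>\<And>i'. hash_ops_within (cH (C i')) _\<close>
    unfolding cop_inv_def by auto
qed

lemma cop_inv_confirm:
  assumes inv: "cop_inv C sg pre" and q: "q = Suc (cc (C i))" and com: "(j, PCom op q h z) \<in> sg"
    and H': "H' = (if cH (C i) q = None
                   then (cH (C i))(q \<mapsto> HHash (the (cH (C i) (q - 1))) op q j) else cH (C i))"
    and h: "H' q = Some h"
  shows "cop_inv (C(i := (C i)\<lparr>cH := H', cs := s', cc := Suc (cc (C i))\<rparr>)) sg (pre @ [OConfirm i op])"
proof -
  note I = inv[unfolded cop_inv_def]
  have "cH (C i) (cc (C i)) \<noteq> None" using I by blast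
  then obtain x where x: "cH (C i) (q - 1) = Some x" using q by auto
  have H'x: "H' = (if cH (C i) q = None then (cH (C i))(q \<mapsto> HHash x op q j) else cH (C i))"
    using H' x by simp
  have chain: "hash_chain (cH (C i))" and within: "hash_ops_within (cH (C i)) (set (invoked pre))"
    and cj: "commits_justified sg pre"
    using I by simp_all
  have "hash_ops_within H' (set (invoked pre))"
    unfolding H'x by (rule hash_ops_within_extend[OF within x commits_justified_op_invoked[OF cj com]])
  have "hash_chain H'"
    unfolding H'x by (rule hash_chain_extend[OF chain x]) (simp add: q)
  show ?thesis
    using I h q \<open>hash_chain H'\<close> \<open>hash_ops_within H' _\<close> commits_justified_append[OF cj]
    unfolding cop_inv_def by simp
qed

lemma cop_inv_respond:
  assumes inv: "cop_inv C sg pre" and pending: "cu (C i) = Some u"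
    and sc: "scan sg i (cc (C i)) (cZ (C i)) 1 \<omega> (cH (C i)) [] [] = Some (H, \<gamma>, \<mu>)"
    and last: "\<omega> \<noteq> []" "fst (last \<omega>) = u" "fst (snd (last \<omega>)) = i"
    and l: "l = cc (C i) + length \<omega>"
  shows "cop_inv (C(i := (C i)\<lparr>cH := H, cZ := Z', cu := None\<rparr>))
           (insert (i, PCom u l (the (H l)) z) sg) (pre @ [OResp i u r])"
proof -
  note I = inv[unfolded cop_inv_def]
  have "cH (C i) (cc (C i)) \<noteq> None" and chain: "hash_chain (cH (C i))"
    and within: "hash_ops_within (cH (C i)) (set (invoked pre))"
    and invoked: "\<forall>j op. (j, PInv op j) \<in> sg \<longrightarrow> op \<in> set (invoked pre)"
    and cj: "commits_justified sg pre"
    using I by simp_all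
  then have "H (cc (C i)) \<noteq> None" using scan_map_le[OF sc] by (auto simp: map_le_def dom_def)
  have "hash_chain H" "hash_ops_within H (set (invoked pre))"
    using scan_hash_chain[OF sc _ _ chain within invoked] \<open>cH (C i) (cc (C i)) \<noteq> None\<close> by simp_all
  obtain x where x: "H l = Some (HHash x u l i)"
    using scan_records_last[OF sc last(1)] last l by auto
  have "u \<in> set (invoked pre)" "u \<notin> set (resps pre)" using I pending by simp_all
  have distinct_pending: "\<forall>i i'. i \<noteq> i' \<longrightarrow> cu (C i) = None \<or> cu (C i) \<noteq> cu (C i')"
    using I by simp
  then have "\<forall>i'. i' \<noteq> i \<longrightarrow> cu (C i') \<noteq> Some u" using pending by (metis option.distinct(1))
  have "hash_ops (HHash x u l i) \<subseteq> set (invoked pre)"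
    using \<open>hash_ops_within H _\<close> x unfolding hash_ops_within_def by blast
  then have "commits_justified (insert (i, PCom u l (the (H l)) z) sg) (pre @ [OResp i u r])"
    using commits_justified_insert_PCom[OF cj] x by simp
  show ?thesis
    using I \<open>hash_chain H\<close> \<open>hash_ops_within H _\<close> \<open>H (cc (C i)) \<noteq> None\<close>
      \<open>commits_justified (insert _ sg) _\<close> \<open>\<forall>i'. i' \<noteq> i \<longrightarrow> cu (C i') \<noteq> Some u\<close>
      \<open>u \<in> set (invoked pre)\<close> \<open>u \<notin> set (resps pre)\<close>
    unfolding cop_inv_def by auto
qed

lemma cop_inv_step:
  assumes inv: "cop_inv (fst g) (snd g) pre" and st: "step F n g e = Some (g', ob)"
    and fresh: "distinct (invoked (pre @ [ob]))"
  shows "cop_inv (fst g') (snd g') (pre @ [ob])"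
proof -
  obtain C sg where g: "g = (C, sg)" by (cases g)
  have I: "cop_inv C sg pre" using inv g by simp
  have halt: "halt_at (C, sg) i = Some (g', ob) \<Longrightarrow> ?thesis" for i
    using cop_inv_halt[OF I] by (auto simp: halt_at_def)
  show ?thesis
  proof (cases e)
    case (EInv i op)
    then have "cu (C i) = None" "g' = (C(i := (C i)\<lparr>cu := Some op\<rparr>), insert (i, PInv op i) sg)"
      "ob = OInvoke i op"
      using st g by (auto simp: step_def split: if_splits)
    then show ?thesis using cop_inv_invoke[OF I] fresh by simp
  next
    case (EReply i \<omega>)
    show ?thesis
    proof (cases "scan sg i (cc (C i)) (cZ (C i)) 1 \<omega> (cH (C i)) [] []")
      case None
      then show ?thesis using st g EReply halt by (auto simp: step_def split: if_splits)
    next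
      case (Some T)
      then obtain H \<gamma> \<mu> where sc: "scan sg i (cc (C i)) (cZ (C i)) 1 \<omega> (cH (C i)) [] [] = Some (H, \<gamma>, \<mu>)"
        by (cases T) auto
      show ?thesis
      proof (cases "\<omega> = [] \<or> Some (fst (last \<omega>)) \<noteq> cu (C i) \<or> fst (snd (last \<omega>)) \<noteq> i")
        case True
        then show ?thesis using st g EReply halt sc by (auto simp: step_def split: if_splits)
      next
        case False
        then have pending: "cu (C i) = Some (fst (last \<omega>))" "\<omega> \<noteq> []" "fst (snd (last \<omega>)) = i"
          by auto
        then obtain Z' z r where "g' = (C(i := (C i)\<lparr>cH := H, cZ := Z', cu := None\<rparr>),
            insert (i, PCom (fst (last \<omega>)) (cc (C i) + length \<omega>) (the (H (cc (C i) + length \<omega>))) z) sg)"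
          "ob = OResp i (fst (last \<omega>)) r"
          using st g EReply sc False by (auto simp: step_def Let_def split: if_splits)
        then show ?thesis using cop_inv_respond[OF I pending(1) sc pending(2) refl pending(3) refl] by simp
      qed
    qed
  next
    case (EBcast i op q h z \<phi> j)
    let ?H' = "if cH (C i) q = None
               then (cH (C i))(q \<mapsto> HHash (the (cH (C i) (q - 1))) op q j) else cH (C i)"
    show ?thesis
    proof (cases "q = cc (C i) + 1 \<and> verify sg j \<phi> (PCom op q h z) \<and> ?H' q = Some h")
      case False
      then show ?thesis using st g EBcast halt by (auto simp: step_def Let_def split: if_splits)
    next
      case True
      then have conf: "q = Suc (cc (C i))" "(j, PCom op q h z) \<in> sg" "?H' q = Some h"
        by (auto simp: verify_def)
      define s' where "s' = (if z = Success then fst (F (cs (C i)) op) else cs (C i))"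
      have "g' = (C(i := (C i)\<lparr>cH := ?H', cs := s', cc := Suc (cc (C i))\<rparr>), sg)"
        "ob = OConfirm i op"
        using st g EBcast True unfolding s'_def by (auto simp: step_def Let_def split: if_splits)
      then show ?thesis using cop_inv_confirm[OF I conf(1,2) refl conf(3)] by simp
    qed
  qed
qed

fun run_state :: "('s \<Rightarrow> 'o \<Rightarrow> 's \<times> 'r) \<Rightarrow> nat \<Rightarrow> ('o, 's) gstate \<Rightarrow> 'o event list \<Rightarrow> ('o, 's) gstate"
  where
  "run_state F n g [] = g"
| "run_state F n g (e # es) = (case step F n g e of None \<Rightarrow> g | Some (g', _) \<Rightarrow> run_state F n g' es)"

lemma run_length: "run F n g es = Some obs \<Longrightarrow> length obs = length es"
  by (induction es arbitrary: g obs) (auto split: option.splits)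

lemma run_nth_step:
  assumes "run F n g es = Some obs" "p < length es"
  shows "step F n (run_state F n g (take p es)) (es ! p) = Some (run_state F n g (take (Suc p) es), obs ! p)"
  using assms
proof (induction es arbitrary: g obs p)
  case (Cons e es)
  then obtain g' ob obs' where "step F n g e = Some (g', ob)" "run F n g' es = Some obs'" "obs = ob # obs'"
    by (auto split: option.splits)
  with Cons show ?case by (cases p) auto
qed simp

lemma cop_inv_run:
  assumes run: "run F n (init s0) es = Some obs" and uniq: "distinct (invoked obs)"
    and "p \<le> length es"
  shows "cop_inv (fst (run_state F n (init s0) (take p es))) (snd (run_state F n (init s0) (take p es)))
           (take p obs)"
  using assms(3)
proof (induction p)
  case 0
  then show ?case using cop_inv_init by simp
next
  case (Suc p)
  have "take (Suc p) obs = take p obs @ [obs ! p]"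
    using run_length[OF run] Suc.prems by (simp add: take_Suc_conv_app_nth)
  moreover have "distinct (invoked (take p obs @ [obs ! p]))"
    using distinct_invoked_take[OF uniq, of "Suc p"] calculation by simp
  ultimately show ?case
    using cop_inv_step[OF Suc.IH run_nth_step[OF run]] Suc.prems by simp
qed

lemma run_distinct_resps:
  assumes "run F n (init s0) es = Some obs" "distinct (invoked obs)"
  shows "distinct (resps obs)"
  using cop_inv_run[OF assms order.refl] run_length[OF assms(1)] unfolding cop_inv_def by simp

lemma step_client_mono:
  assumes "step F n g e = Some (g', ob)"
  shows "cc (fst g i) \<le> cc (fst g' i) \<and> cH (fst g i) \<subseteq>\<^sub>m cH (fst g' i)"
proof -
  obtain C sg where g: "g = (C, sg)" by (cases g)
  show ?thesis
  proof (cases e)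
    case (EInv x y)
    then show ?thesis using assms g by (auto simp: step_def split: if_splits)
  next
    case (EReply x \<omega>)
    show ?thesis
    proof (cases "scan sg x (cc (C x)) (cZ (C x)) 1 \<omega> (cH (C x)) [] []")
      case None
      then show ?thesis using assms g EReply by (auto simp: step_def halt_at_def split: if_splits)
    next
      case (Some T)
      then obtain H \<gamma> \<mu> where sc: "scan sg x (cc (C x)) (cZ (C x)) 1 \<omega> (cH (C x)) [] [] = Some (H, \<gamma>, \<mu>)"
        by (cases T) auto
      show ?thesis using assms g EReply sc scan_map_le[OF sc]
        by (auto simp: step_def halt_at_def Let_def split: if_splits)
    qed
  next
    case (EBcast x op q h z \<phi> j)
    then show ?thesis using assms g by (auto simp: step_def halt_at_def Let_def map_le_def split: if_splits)
  qed
qed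

lemma run_client_mono:
  assumes run: "run F n g es = Some obs" and "p \<le> p'" "p' \<le> length es"
  shows "cc (fst (run_state F n g (take p es)) i) \<le> cc (fst (run_state F n g (take p' es)) i) \<and>
         cH (fst (run_state F n g (take p es)) i) \<subseteq>\<^sub>m cH (fst (run_state F n g (take p' es)) i)"
  using assms(2,3)
proof (induction p')
  case (Suc p')
  show ?case
  proof (cases "p = Suc p'")
    case False
    then have "p \<le> p'" using Suc.prems by simp
    then show ?thesis
      using Suc.IH step_client_mono[OF run_nth_step[OF run], of p' i] Suc.prems map_le_trans
      by fastforce
  qed simp
qed simp

lemma step_confirm:
  assumes "step F n g e = Some (g', OConfirm k op)"
  shows "\<exists>q h z j. (j, PCom op q h z) \<in> snd g \<and> q = Suc (cc (fst g k)) \<and> cc (fst g' k) = q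
           \<and> cH (fst g' k) q = Some h"
proof -
  obtain C sg where g: "g = (C, sg)" by (cases g)
  show ?thesis
  proof (cases e)
    case (EInv x y)
    then show ?thesis using assms g by (auto simp: step_def split: if_splits)
  next
    case (EReply x \<omega>)
    then show ?thesis using assms g
      by (auto simp: step_def halt_at_def Let_def split: if_splits option.splits prod.splits)
  next
    case (EBcast x op q h z \<phi> j)
    then show ?thesis using assms g
      by (auto simp: step_def halt_at_def Let_def verify_def split: if_splits; blast)
  qed
qed

lemma run_confirm:
  assumes run: "run F n g0 es = Some obs" and "t < length obs" "obs ! t = OConfirm k op"
  shows "\<exists>q h z j. (j, PCom op q h z) \<in> snd (run_state F n g0 (take t es))
           \<and> q = Suc (cc (fst (run_state F n g0 (take t es)) k))
           \<and> cc (fst (run_state F n g0 (take (Suc t) es)) k) = q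
           \<and> cH (fst (run_state F n g0 (take (Suc t) es)) k) q = Some h"
proof -
  have "step F n (run_state F n g0 (take t es)) (es ! t)
          = Some (run_state F n g0 (take (Suc t) es), OConfirm k op)"
    using run_nth_step[OF run] run_length[OF run] assms(2,3) by simp
  from step_confirm[OF this] show ?thesis by simp
qed

lemma confirmed_op_invoked_before_response:
  assumes run: "run F n (init s0) es = Some obs" and uniq: "distinct (invoked obs)"
    and "t1 < t2" "t2 < length obs"
    and "obs ! t1 = OConfirm k o1" "obs ! t2 = OConfirm k o2"
  shows "\<exists>p<t2. \<exists>j r. obs ! p = OResp j o2 r \<and> o1 \<in> set (invoked (take p obs))"
proof -
  define g where "g p = run_state F n (init s0) (take p es)" for p
  have len: "length obs = length es" using run_length[OF run] .
  have inv: "cop_inv (fst (g p)) (snd (g p)) (take p obs)" if "p \<le> length es" for p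
    using cop_inv_run[OF run uniq that] unfolding g_def .
  have cj: "commits_justified (snd (g p)) (take p obs)" if "p \<le> length es" for p
    using inv[OF that] unfolding cop_inv_def by simp
  obtain q1 h1 z1 j1 where com1: "(j1, PCom o1 q1 h1 z1) \<in> snd (g t1)"
    and cc1: "cc (fst (g (Suc t1)) k) = q1" and h1: "cH (fst (g (Suc t1)) k) q1 = Some h1"
    using run_confirm[OF run, of t1 k o1] assms(3-5) unfolding g_def by auto
  obtain q2 h2 z2 j2 where com2: "(j2, PCom o2 q2 h2 z2) \<in> snd (g t2)"
    and q2: "q2 = Suc (cc (fst (g t2) k))" and h2: "cH (fst (g (Suc t2)) k) q2 = Some h2"
    using run_confirm[OF run, of t2 k o2] assms(4,6) unfolding g_def by auto
  have "q1 \<le> q2"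
    using run_client_mono[OF run, of "Suc t1" t2 k] assms(3,4) len cc1 q2 unfolding g_def by simp
  moreover have "cH (fst (g (Suc t2)) k) q1 = Some h1"
    using run_client_mono[OF run, of "Suc t1" "Suc t2" k] assms(3,4) len h1
    unfolding g_def by (auto simp: map_le_def dom_def)
  moreover have "hash_chain (cH (fst (g (Suc t2)) k))"
    using inv[of "Suc t2"] assms(4) len unfolding cop_inv_def by simp
  moreover have "o1 \<in> hash_ops h1"
    using commits_justified_op_in_hash[OF cj com1] assms(3,4) len by simp
  ultimately have "o1 \<in> hash_ops h2" using hash_chain_ops_mono h2 by blast
  moreover have "commits_justified (snd (g t2)) (take t2 obs)" using cj assms(4) len by simp
  then obtain p r where "p < length (take t2 obs)" "take t2 obs ! p = OResp j2 o2 r"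
    "hash_ops h2 \<subseteq> set (invoked (take p (take t2 obs)))"
    using com2 unfolding commits_justified_def by blast
  ultimately show ?thesis using assms(4) by (intro exI[of _ p]) (auto simp: min_def)
qed

theorem lemma4:
  fixes F :: "'s \<Rightarrow> 'o \<Rightarrow> 's \<times> 'r" and s0 :: 's and n :: nat
    and es :: "'o event list" and obs :: "('o, 'r) obs list"
    and k t1 t2 :: nat and o1 o2 :: 'o
  assumes exec: "run F n (init s0) es = Some obs"
    and uniq: "distinct (invoked obs)"
    and order: "t1 < t2" and len: "t2 < length obs"
    and c1: "obs ! t1 = OConfirm k o1"
    and c2: "obs ! t2 = OConfirm k o2"
  shows "\<not> precedes obs o2 o1"
proof
  assume "precedes obs o2 o1"
  then obtain a b i i' r where "a < b" "b < length obs"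
    and resp: "obs ! a = OResp i o2 r" and inv: "obs ! b = OInvoke i' o1"
    unfolding precedes_def by blast
  from confirmed_op_invoked_before_response[OF exec uniq order len c1 c2]
  obtain p j r' where "p < t2" and resp': "obs ! p = OResp j o2 r'"
    and "o1 \<in> set (invoked (take p obs))"
    by blast
  from invoked_take_nth[OF this(3)]
  obtain b' i'' where "b' < p" "b' < length obs" and inv': "obs ! b' = OInvoke i'' o1"
    by blast
  have "b' = b"
    by (rule nth_eq_if_distinct_concat_map[OF uniq[unfolded invoked_def], of b' b o1])
      (use inv inv' \<open>b < length obs\<close> \<open>b' < length obs\<close> in simp_all)
  moreover have "a = p"
    by (rule nth_eq_if_distinct_concat_map[OF run_distinct_resps[OF exec uniq, unfolded resps_def],
          of a p o2])
      (use resp resp' \<open>a < b\<close> \<open>b < length obs\<close> \<open>p < t2\<close> len in simp_all)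
  ultimately show False using \<open>a < b\<close> \<open>b' < p\<close> by simp
qed

end
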